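(* Let $F\subset S^{2n-1}$ be nonempty. If $\{\lambda_1,\dots,\lambda_n\}$ is linearly independent over $\mathbb{Z}$, then every point $w=(w_1,\dots,w_n)\in\bar F$ with $w_k\ne0$ for all $k$ generates a nonsparse leaf of $S^X_0(F)$. Conversely, if $\{\lambda_1,\dots,\lambda_n\}$ is linearly dependent over $\mathbb{Z}$, then there exists a set $G\subset S^{2n-1}$ such that $S^X_0(G)$ has no nonsparse leaf and $S^X_0(G)$ contains the point $\big(e^{-\lambda_1}/\sqrt n,\dots,e^{-\lambda_n}/\sqrt n\big)$.
   Context: Fix $n\ge1$ and $\lambda=(\lambda_1,\dots,\lambda_n)$ with $\lambda_1=1$, $\lambda_k>0$ for all $k$. For $z\in\mathbb{C}^n$, $t\in\mathbb{C}$ put $\Phi^X(z,t)=(z_1e^{-\lambda_1t},\dots,z_ne^{-\lambda_nt})$; $\mathbb{H}=\{\operatorname{Re}t>0\}$; $S^{2n-1}$ the unit sphere in $\mathbb{C}^n$. $S^X_0(F)=\{\Phi^X(z,t):z\in F,t\in\mathbb{H}\}$; for $z\in\bar F$ its leaf is $L_z=\{\Phi^X(z,t):t\in\mathbb{H}\}$, generated by $z$. A polynomial $q\in\mathbb{C}[z,\bar z]$ is quasi-homogeneous of type $\lambda$ with bidegree $(d_1,d_2)$ if $q(\Phi^X(z,t))=e^{-d_1t}e^{-d_2\bar t}q(z)$ for all $t\in\mathbb{H}$, $z\in\mathbb{C}^n$; $\mathcal{H}_\lambda$ is the set of such polynomials. The leaf $L_z$, $z\in\bar F$, is nonsparse if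 for every open neighborhood $U\subset S^{2n-1}$ of $z$ and every $q\in\mathcal{H}_\lambda$ of bidegree $(d_1,d_2)$ with $d_2\ne0$ and $\bar F\cap U\subset\{q=0\}$, one has $q\equiv0$ on $\mathbb{C}^n$. *)

theory Defs
  imports "HOL-Analysis.Analysis"
begin

text \<open>Points of C^n are modelled as functions nat => complex vanishing at indices >= n;
  coordinate z_k of the paper is z (k-1). The topology on nat => complex is the product
  topology, which on the closed subspace C^n agrees with the Euclidean topology.\<close>

definition Cn :: "nat \<Rightarrow> (nat \<Rightarrow> complex) set" where
  "Cn n = {z. \<forall>i\<ge>n. z i = 0}"

definition unit_sphere :: "nat \<Rightarrow> (nat \<Rightarrow> complex) set" where
  "unit_sphere n = {z \<in> Cn n. (\<Sum>i<n. (cmod (z i))\<^sup>2) = 1}"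

definition Phi :: "(nat \<Rightarrow> real) \<Rightarrow> (nat \<Rightarrow> complex) \<Rightarrow> complex \<Rightarrow> (nat \<Rightarrow> complex)" where
  "Phi lam z t = (\<lambda>i. z i * exp (- (complex_of_real (lam i) * t)))"

definition right_half_plane :: "complex set" where
  "right_half_plane = {t. Re t > 0}"

definition S0 :: "(nat \<Rightarrow> real) \<Rightarrow> (nat \<Rightarrow> complex) set \<Rightarrow> (nat \<Rightarrow> complex) set" where
  "S0 lam F = {Phi lam z t | z t. z \<in> F \<and> t \<in> right_half_plane}"

definition leaf :: "(nat \<Rightarrow> real) \<Rightarrow> (nat \<Rightarrow> complex) \<Rightarrow> (nat \<Rightarrow> complex) set" where
  "leaf lam z = Phi lam z ` right_half_plane"

definition poly_zzbar :: "nat \<Rightarrow> ((nat \<Rightarrow> complex) \<Rightarrow> complex) \<Rightarrow> bool" where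
  "poly_zzbar n q \<longleftrightarrow> (\<exists>c :: (nat \<Rightarrow> nat) \<times> (nat \<Rightarrow> nat) \<Rightarrow> complex.
      finite {p. c p \<noteq> 0} \<and>
      (\<forall>\<alpha> \<beta>. c (\<alpha>, \<beta>) \<noteq> 0 \<longrightarrow> (\<forall>i\<ge>n. \<alpha> i = 0 \<and> \<beta> i = 0)) \<and>
      (\<forall>z. q z = (\<Sum>p\<in>{p. c p \<noteq> 0}.
           c p * (\<Prod>i<n. z i ^ fst p i * cnj (z i) ^ snd p i))))"

definition quasi_hom :: "nat \<Rightarrow> (nat \<Rightarrow> real) \<Rightarrow> ((nat \<Rightarrow> complex) \<Rightarrow> complex) \<Rightarrow> real \<Rightarrow> real \<Rightarrow> bool" where
  "quasi_hom n lam q d1 d2 \<longleftrightarrow> poly_zzbar n q \<and>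
     (\<forall>t\<in>right_half_plane. \<forall>z\<in>Cn n.
        q (Phi lam z t) = exp (- (complex_of_real d1 * t)) * exp (- (complex_of_real d2 * cnj t)) * q z)"

definition nonsparse_leaf :: "nat \<Rightarrow> (nat \<Rightarrow> real) \<Rightarrow> (nat \<Rightarrow> complex) set \<Rightarrow> (nat \<Rightarrow> complex) \<Rightarrow> bool" where
  "nonsparse_leaf n lam F z \<longleftrightarrow> z \<in> closure F \<and>
     (\<forall>U q d1 d2. openin (top_of_set (unit_sphere n)) U \<and> z \<in> U \<and>
        quasi_hom n lam q d1 d2 \<and> d2 \<noteq> 0 \<and> closure F \<inter> U \<subseteq> {x. q x = 0}
        \<longrightarrow> (\<forall>x\<in>Cn n. q x = 0))"

definition Z_lin_indep :: "nat \<Rightarrow> (nat \<Rightarrow> real) \<Rightarrow> bool" where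
  "Z_lin_indep n lam \<longleftrightarrow>
     (\<forall>c :: nat \<Rightarrow> int. (\<Sum>i<n. real_of_int (c i) * lam i) = 0 \<longrightarrow> (\<forall>i<n. c i = 0))"

end

theory Submission
  imports Defs
begin

text \<open>Each monomial $z^\alpha \bar z^\beta$ is quasi-homogeneous of bidegree
  $(\langle\lambda,\alpha\rangle, \langle\lambda,\beta\rangle)$. If $\lambda$ is linearly
  independent over $\mathbb{Z}$, distinct exponent pairs have distinct bidegrees; restricting a
  quasi-homogeneous $q$ to the orbit of $(1,\dots,1)$ along the ray $t = s(1+i)$ and using the
  linear independence of the exponentials $e^{\omega s}$ then shows that $q$ is a single monomial,
  which cannot vanish at a point with nonzero coordinates unless $q = 0$.

  If $\sum_i c_i\lambda_i = 0$ with $c \neq 0$, split $c = a - b$ into positive and negative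
  parts: $z^a\bar z^b - z^b\bar z^a$ is quasi-homogeneous of bidegree $(d,d)$ with $d > 0$, vanishes
  at every real point but not identically. Hence the leaf through the real point
  $(1/\sqrt n,\dots,1/\sqrt n)$ of the sphere is not nonsparse, and its image at $t = 1$ is the
  required point.\<close>

lemma exp_neq_1_if_norm_eq_1:
  fixes z :: complex
  assumes "norm z = 1"
  shows "exp z \<noteq> 1"
proof
  assume "exp z = 1"
  then obtain m :: int where "Re z = 0" and "Im z = of_int (2 * m) * pi"
    by (auto simp: exp_eq_1)
  then have "2 * \<bar>of_int m\<bar> * pi = 1"
    using assms by (simp add: cmod_def abs_mult)
  moreover have "m = 0 \<or> \<bar>real_of_int m\<bar> \<ge> 1"
    by linarith
  moreover have "2 * \<bar>of_int m\<bar> * pi \<ge> 2 * pi" if "\<bar>real_of_int m\<bar> \<ge> 1"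
    using that by simp
  ultimately show False
    using pi_gt3 by auto
qed

lemma exp_separating_time:
  fixes \<omega> v :: complex
  assumes "\<omega> \<noteq> v"
  obtains h :: real where "h > 0" and "exp (\<omega> * of_real h) \<noteq> exp (v * of_real h)"
proof
  let ?h = "1 / cmod (\<omega> - v)"
  show "?h > 0" using assms by simp
  have "cmod ((\<omega> - v) * of_real ?h) = 1"
    using assms unfolding norm_mult norm_of_real by simp
  then have "exp ((\<omega> - v) * of_real ?h) \<noteq> 1"
    by (rule exp_neq_1_if_norm_eq_1)
  then show "exp (\<omega> * of_real ?h) \<noteq> exp (v * of_real ?h)"
    by (metis exp_diff left_diff_distrib divide_self exp_not_eq_zero)
qed

lemma exp_linear_independent:
  fixes k :: "complex \<Rightarrow> complex"
  assumes "finite W" and "\<forall>s>0. (\<Sum>\<omega>\<in>W. k \<omega> * exp (\<omega> * of_real s)) = 0"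
  shows "\<forall>\<omega>\<in>W. k \<omega> = 0"
  using assms
proof (induction W arbitrary: k rule: finite_induct)
  case empty
  then show ?case by simp
next
  case (insert v W)
  let ?f = "\<lambda>s. \<Sum>\<omega>\<in>W. k \<omega> * exp (\<omega> * of_real s)"
  have sum_insert: "k v * exp (v * of_real s) + ?f s = 0" if "s > 0" for s
    using insert.prems insert.hyps that by simp
  have "k \<omega> = 0" if "\<omega> \<in> W" for \<omega>
  proof -
    have "\<omega> \<noteq> v"
      using \<open>\<omega> \<in> W\<close> insert.hyps by blast
    then obtain h where "h > 0" and separates: "exp (\<omega> * of_real h) \<noteq> exp (v * of_real h)"
      by (rule exp_separating_time)
    have "\<forall>s>0. (\<Sum>\<omega>'\<in>W. (k \<omega>' * (exp (\<omega>' * of_real h) - exp (v * of_real h))) * exp (\<omega>' * of_real s)) = 0"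
    proof (intro allI impI)
      fix s :: real
      assume "s > 0"
      have shift: "exp (x * of_real (s + h)) = exp (x * of_real h) * exp (x * of_real s)" for x :: complex
        unfolding of_real_add distrib_left exp_add by (rule mult.commute)
      have "(\<Sum>\<omega>'\<in>W. (k \<omega>' * (exp (\<omega>' * of_real h) - exp (v * of_real h))) * exp (\<omega>' * of_real s))
          = (k v * exp (v * of_real (s + h)) + ?f (s + h)) - exp (v * of_real h) * (k v * exp (v * of_real s) + ?f s)"
        unfolding shift by (simp add: sum_distrib_left sum_subtractf algebra_simps)
      also have "\<dots> = 0"
        using sum_insert[of s] sum_insert[of "s + h"] \<open>s > 0\<close> \<open>h > 0\<close> by simp
      finally show "(\<Sum>\<omega>'\<in>W. (k \<omega>' * (exp (\<omega>' * of_real h) - exp (v * of_real h))) * exp (\<omega>' * of_real s)) = 0" .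
    qed
    from insert.IH[OF this] \<open>\<omega> \<in> W\<close>
    have "k \<omega> * (exp (\<omega> * of_real h) - exp (v * of_real h)) = 0"
      by (rule bspec)
    then show ?thesis
      using separates by simp
  qed
  moreover have "k v = 0"
    using sum_insert[of 1] calculation by simp
  ultimately show ?case by simp
qed

lemma exp_sum_eq_exp_imp_coeff_eq_0:
  fixes c :: "'a \<Rightarrow> complex" and \<omega> :: "'a \<Rightarrow> complex"
  assumes "finite S" and "inj_on \<omega> S"
    and eq: "\<forall>s>0. (\<Sum>p\<in>S. c p * exp (\<omega> p * of_real s)) = Q * exp (\<omega>0 * of_real s)"
    and "p \<in> S" and "\<omega> p \<noteq> \<omega>0"
  shows "c p = 0"
proof -
  define W where "W = insert \<omega>0 (\<omega> ` S)"
  define k where "k x = sum c {p\<in>S. \<omega> p = x} - (if x = \<omega>0 then Q else 0)" for x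
  have "finite W" using \<open>finite S\<close> by (simp add: W_def)
  have "(\<Sum>x\<in>W. k x * exp (x * of_real s)) = 0" if "s > 0" for s
  proof -
    have "(\<Sum>x\<in>W. sum c {p\<in>S. \<omega> p = x} * exp (x * of_real s)) = (\<Sum>p\<in>S. c p * exp (\<omega> p * of_real s))"
      using sum.group[OF \<open>finite S\<close> \<open>finite W\<close>, of \<omega> "\<lambda>p. c p * exp (\<omega> p * of_real s)"]
      by (auto simp: W_def sum_distrib_right intro: sum.cong)
    moreover have "(\<Sum>x\<in>W. (if x = \<omega>0 then Q else 0) * exp (x * of_real s))
        = (\<Sum>x\<in>W. if x = \<omega>0 then Q * exp (\<omega>0 * of_real s) else 0)"
      by (rule sum.cong) auto
    then have "(\<Sum>x\<in>W. (if x = \<omega>0 then Q else 0) * exp (x * of_real s)) = Q * exp (\<omega>0 * of_real s)"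
      using \<open>finite W\<close> by (simp add: W_def)
    ultimately show ?thesis
      using eq \<open>s > 0\<close> by (simp add: k_def left_diff_distrib sum_subtractf)
  qed
  then have "k (\<omega> p) = 0"
    using exp_linear_independent[OF \<open>finite W\<close>] \<open>p \<in> S\<close> by (auto simp: W_def)
  moreover have "{p'\<in>S. \<omega> p' = \<omega> p} = {p}"
    using \<open>inj_on \<omega> S\<close> \<open>p \<in> S\<close> by (auto dest: inj_onD)
  ultimately show ?thesis
    using \<open>\<omega> p \<noteq> \<omega>0\<close> by (simp add: k_def)
qed

definition zzbar_monomial :: "nat \<Rightarrow> (nat \<Rightarrow> nat) \<Rightarrow> (nat \<Rightarrow> nat) \<Rightarrow> (nat \<Rightarrow> complex) \<Rightarrow> complex" where
  "zzbar_monomial n \<alpha> \<beta> z = (\<Prod>i<n. z i ^ \<alpha> i * cnj (z i) ^ \<beta> i)"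

definition weight :: "nat \<Rightarrow> (nat \<Rightarrow> real) \<Rightarrow> (nat \<Rightarrow> nat) \<Rightarrow> real" where
  "weight n lam \<alpha> = (\<Sum>i<n. lam i * real (\<alpha> i))"

lemma exp_minus_mult_power:
  fixes t :: complex
  shows "exp (- (of_real l * t)) ^ a = exp (- (of_real l * of_nat a * t))"
proof -
  have "of_nat a * (- (of_real l * t)) = - (of_real l * of_nat a * t)"
    by algebra
  then show ?thesis
    by (metis exp_of_nat_mult)
qed

lemma prod_exp_eq_exp_weight:
  "(\<Prod>i<n. exp (- (of_real (lam i * real (\<alpha> i)) * t))) = exp (- (of_real (weight n lam \<alpha>) * t))"
proof -
  have "(\<Prod>i<n. exp (- (of_real (lam i * real (\<alpha> i)) * t))) = exp (\<Sum>i<n. - (of_real (lam i * real (\<alpha> i)) * t))"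
    by (simp add: exp_sum)
  also have "(\<Sum>i<n. - (of_real (lam i * real (\<alpha> i)) * t)) = - (of_real (weight n lam \<alpha>) * t)"
    by (simp add: weight_def sum_negf sum_distrib_right)
  finally show ?thesis .
qed

lemma zzbar_monomial_Phi:
  "zzbar_monomial n \<alpha> \<beta> (Phi lam z t) =
     exp (- (of_real (weight n lam \<alpha>) * t)) * exp (- (of_real (weight n lam \<beta>) * cnj t))
       * zzbar_monomial n \<alpha> \<beta> z"
proof -
  have factor: "(z i * exp (- (of_real (lam i) * t))) ^ \<alpha> i * cnj (z i * exp (- (of_real (lam i) * t))) ^ \<beta> i
      = exp (- (of_real (lam i * real (\<alpha> i)) * t)) * exp (- (of_real (lam i * real (\<beta> i)) * cnj t))
        * (z i ^ \<alpha> i * cnj (z i) ^ \<beta> i)" for i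
    unfolding complex_cnj_mult exp_cnj power_mult_distrib
    by (simp add: exp_minus_mult_power)
  have "zzbar_monomial n \<alpha> \<beta> (Phi lam z t) = (\<Prod>i<n. exp (- (of_real (lam i * real (\<alpha> i)) * t))
      * exp (- (of_real (lam i * real (\<beta> i)) * cnj t)) * (z i ^ \<alpha> i * cnj (z i) ^ \<beta> i))"
    by (simp only: zzbar_monomial_def Phi_def factor)
  also have "\<dots> = (\<Prod>i<n. exp (- (of_real (lam i * real (\<alpha> i)) * t)))
      * (\<Prod>i<n. exp (- (of_real (lam i * real (\<beta> i)) * cnj t))) * zzbar_monomial n \<alpha> \<beta> z"
    by (simp only: zzbar_monomial_def prod.distrib)
  finally show ?thesis
    by (simp only: prod_exp_eq_exp_weight)
qed

lemma zzbar_monomial_swap_real: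
  assumes "\<forall>i. cnj (u i) = u i"
  shows "zzbar_monomial n \<alpha> \<beta> u = zzbar_monomial n \<beta> \<alpha> u"
  unfolding zzbar_monomial_def using assms by (intro prod.cong) (auto simp: mult.commute)

lemma weight_inj:
  assumes "Z_lin_indep n lam" and "\<forall>i\<ge>n. \<alpha> i = 0" and "\<forall>i\<ge>n. \<alpha>' i = 0"
    and "weight n lam \<alpha> = weight n lam \<alpha>'"
  shows "\<alpha> = \<alpha>'"
proof
  fix i
  have "(\<Sum>j<n. real_of_int (int (\<alpha> j) - int (\<alpha>' j)) * lam j) = weight n lam \<alpha> - weight n lam \<alpha>'"
    by (simp add: weight_def sum_subtractf algebra_simps)
  then have "\<forall>j<n. int (\<alpha> j) - int (\<alpha>' j) = 0"
    using assms(1)[unfolded Z_lin_indep_def, rule_format, of "\<lambda>j. int (\<alpha> j) - int (\<alpha>' j)"] assms(4)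
    by simp
  then show "\<alpha> i = \<alpha>' i"
    using assms(2,3) by (cases "i < n") auto
qed

definition ray_frequency :: "real \<Rightarrow> real \<Rightarrow> complex" where
  "ray_frequency a b = - (of_real a * (1 + \<i>) + of_real b * (1 - \<i>))"

lemma ray_frequency_eq_iff: "ray_frequency a b = ray_frequency a' b' \<longleftrightarrow> a = a' \<and> b = b'"
  by (auto simp: ray_frequency_def complex_eq_iff)

lemma exp_bidegree_on_ray:
  "exp (- (of_real a * (of_real s * (1 + \<i>)))) * exp (- (of_real b * (of_real s * (1 - \<i>))))
     = exp (ray_frequency a b * of_real s)"
  by (simp add: ray_frequency_def flip: exp_add) (simp add: algebra_simps)

lemma quasi_hom_monomial_bidegree:
  assumes indep: "Z_lin_indep n lam" and hq: "quasi_hom n lam q d1 d2" and "finite S"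
    and q_eq: "\<And>z. q z = (\<Sum>p\<in>S. c p * zzbar_monomial n (fst p) (snd p) z)"
    and supported: "\<And>p. p \<in> S \<Longrightarrow> \<forall>i\<ge>n. fst p i = 0 \<and> snd p i = 0"
    and "p \<in> S" and "c p \<noteq> 0"
  shows "weight n lam (fst p) = d1 \<and> weight n lam (snd p) = d2"
proof -
  define \<omega> where "\<omega> p = ray_frequency (weight n lam (fst p)) (weight n lam (snd p))" for p
  define ones where "ones i = (if i < n then 1 else 0 :: complex)" for i
  have "ones \<in> Cn n" and monomial_ones: "\<And>\<alpha> \<beta>. zzbar_monomial n \<alpha> \<beta> ones = 1"
    by (simp_all add: ones_def Cn_def zzbar_monomial_def)
  have "\<forall>s>0. (\<Sum>p\<in>S. c p * exp (\<omega> p * of_real s)) = q ones * exp (ray_frequency d1 d2 * of_real s)"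
  proof (intro allI impI)
    fix s :: real
    assume "s > 0"
    then have t: "of_real s * (1 + \<i>) \<in> right_half_plane"
      by (simp add: right_half_plane_def)
    have "q (Phi lam ones (of_real s * (1 + \<i>))) = (\<Sum>p\<in>S. c p * exp (\<omega> p * of_real s))"
      by (simp add: q_eq zzbar_monomial_Phi monomial_ones exp_bidegree_on_ray \<omega>_def)
    moreover have "q (Phi lam ones (of_real s * (1 + \<i>))) = q ones * exp (ray_frequency d1 d2 * of_real s)"
      using hq t \<open>ones \<in> Cn n\<close> by (simp add: quasi_hom_def exp_bidegree_on_ray mult.commute)
    ultimately show "(\<Sum>p\<in>S. c p * exp (\<omega> p * of_real s)) = q ones * exp (ray_frequency d1 d2 * of_real s)"
      by simp
  qed
  moreover have "inj_on \<omega> S"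
  proof (rule inj_onI)
    fix p p'
    assume "p \<in> S" "p' \<in> S" "\<omega> p = \<omega> p'"
    then have weights: "weight n lam (fst p) = weight n lam (fst p')" "weight n lam (snd p) = weight n lam (snd p')"
      by (simp_all add: \<omega>_def ray_frequency_eq_iff)
    have "fst p = fst p'" and "snd p = snd p'"
      using supported[OF \<open>p \<in> S\<close>] supported[OF \<open>p' \<in> S\<close>] weights
      by (intro weight_inj[OF indep]; simp)+
    then show "p = p'"
      by (simp add: prod_eq_iff)
  qed
  ultimately have "\<omega> p = ray_frequency d1 d2"
    using exp_sum_eq_exp_imp_coeff_eq_0[OF \<open>finite S\<close>] \<open>p \<in> S\<close> \<open>c p \<noteq> 0\<close> by blast
  then show ?thesis
    by (simp add: \<omega>_def ray_frequency_eq_iff)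
qed

lemma quasi_hom_is_monomial:
  assumes indep: "Z_lin_indep n lam" and hq: "quasi_hom n lam q d1 d2"
  obtains c \<alpha> \<beta> where "\<forall>z. q z = c * zzbar_monomial n \<alpha> \<beta> z"
proof -
  obtain c where finite: "finite {p. c p \<noteq> 0}"
    and support: "\<forall>\<alpha> \<beta>. c (\<alpha>, \<beta>) \<noteq> 0 \<longrightarrow> (\<forall>i\<ge>n. \<alpha> i = 0 \<and> \<beta> i = 0)"
    and sum: "\<forall>z. q z = (\<Sum>p\<in>{p. c p \<noteq> 0}. c p * (\<Prod>i<n. z i ^ fst p i * cnj (z i) ^ snd p i))"
    using hq unfolding quasi_hom_def poly_zzbar_def by blast
  define S where "S = {p. c p \<noteq> 0}"
  have "finite S"
    using finite by (simp add: S_def)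
  have q_eq: "q z = (\<Sum>p\<in>S. c p * zzbar_monomial n (fst p) (snd p) z)" for z
    using sum by (simp add: S_def zzbar_monomial_def)
  have supported: "\<forall>i\<ge>n. fst p i = 0 \<and> snd p i = 0" if "p \<in> S" for p
    using support that by (cases p) (simp add: S_def)
  have bidegree: "weight n lam (fst p) = d1 \<and> weight n lam (snd p) = d2" if "p \<in> S" for p
    using quasi_hom_monomial_bidegree[OF indep hq \<open>finite S\<close> q_eq supported that] that
    by (simp add: S_def)
  have "p' = p" if "p \<in> S" and "p' \<in> S" for p p'
  proof -
    have "fst p' = fst p" and "snd p' = snd p"
      using supported[OF \<open>p \<in> S\<close>] supported[OF \<open>p' \<in> S\<close>] bidegree[OF \<open>p \<in> S\<close>] bidegree[OF \<open>p' \<in> S\<close>]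
      by (intro weight_inj[OF indep]; simp)+
    then show ?thesis
      by (simp add: prod_eq_iff)
  qed
  then consider "S = {}" | p where "S = {p}"
    by (metis empty_iff insertI1 subsetI subset_singletonD)
  then show thesis
  proof cases
    case 1
    then show thesis using that[of 0] q_eq by simp
  next
    case (2 p)
    then show thesis using that[of "c p" "fst p" "snd p"] q_eq by simp
  qed
qed

lemma quasi_hom_vanishing_at_nonzero_point:
  assumes "Z_lin_indep n lam" and "quasi_hom n lam q d1 d2"
    and "\<forall>k<n. w k \<noteq> 0" and "q w = 0"
  shows "q z = 0"
proof -
  obtain c \<alpha> \<beta> where q_eq: "\<forall>z. q z = c * zzbar_monomial n \<alpha> \<beta> z"
    using quasi_hom_is_monomial[OF assms(1,2)] .
  moreover have "zzbar_monomial n \<alpha> \<beta> w \<noteq> 0"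
    using assms(3) by (simp add: zzbar_monomial_def)
  ultimately have "c = 0"
    using assms(4) by simp
  then show ?thesis
    using q_eq by simp
qed

lemma Z_dependent_obtain_positive_relation:
  assumes "\<not> Z_lin_indep n lam"
  obtains c :: "nat \<Rightarrow> int" and k where "(\<Sum>i<n. of_int (c i) * lam i) = 0" and "k < n" and "c k > 0"
proof -
  obtain c k where relation: "(\<Sum>i<n. of_int (c i) * lam i) = 0" and "k < n" and "c k \<noteq> 0"
    using assms unfolding Z_lin_indep_def by blast
  show thesis
  proof (cases "c k > 0")
    case True
    then show thesis using that relation \<open>k < n\<close> by blast
  next
    case False
    then have "- c k > 0" using \<open>c k \<noteq> 0\<close> by simp
    moreover have "(\<Sum>i<n. of_int (- c i) * lam i) = 0"
      using relation by (simp add: sum_negf)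
    ultimately show thesis
      using that[of "\<lambda>i. - c i" k] \<open>k < n\<close> by simp
  qed
qed

lemma quasi_hom_zzbar_monomial_diff:
  assumes "\<forall>i\<ge>n. \<alpha> i = 0" and "\<forall>i\<ge>n. \<beta> i = 0" and "\<alpha> \<noteq> \<beta>"
    and "weight n lam \<alpha> = d" and "weight n lam \<beta> = d"
  shows "quasi_hom n lam (\<lambda>z. zzbar_monomial n \<alpha> \<beta> z - zzbar_monomial n \<beta> \<alpha> z) d d"
proof -
  define C where "C p = (if p = (\<alpha>, \<beta>) then 1 else if p = (\<beta>, \<alpha>) then -1 else 0 :: complex)" for p
  have support: "{p. C p \<noteq> 0} = {(\<alpha>, \<beta>), (\<beta>, \<alpha>)}"
    using assms(3) by (auto simp: C_def)
  have "poly_zzbar n (\<lambda>z. zzbar_monomial n \<alpha> \<beta> z - zzbar_monomial n \<beta> \<alpha> z)"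
    unfolding poly_zzbar_def
  proof (intro exI[of _ C] conjI allI impI)
    show "finite {p. C p \<noteq> 0}"
      by (simp add: support)
  next
    fix \<alpha>' \<beta>' i
    assume "C (\<alpha>', \<beta>') \<noteq> 0" and "n \<le> i"
    then show "\<alpha>' i = 0" and "\<beta>' i = 0"
      using assms(1,2) by (auto simp: C_def split: if_splits)
  next
    fix z
    show "zzbar_monomial n \<alpha> \<beta> z - zzbar_monomial n \<beta> \<alpha> z
        = (\<Sum>p\<in>{p. C p \<noteq> 0}. C p * (\<Prod>i<n. z i ^ fst p i * cnj (z i) ^ snd p i))"
      using assms(3) unfolding support by (simp add: C_def zzbar_monomial_def)
  qed
  then show ?thesis
    using assms(4,5) by (simp add: quasi_hom_def zzbar_monomial_Phi algebra_simps)
qed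

lemma zzbar_monomial_diff_nonzero:
  assumes "k < n" and "\<alpha> k > 0" and "\<beta> k = 0"
  obtains x where "x \<in> Cn n" and "zzbar_monomial n \<alpha> \<beta> x \<noteq> zzbar_monomial n \<beta> \<alpha> x"
proof
  define \<zeta> where "\<zeta> = exp (\<i> * of_real (pi / (2 * real (\<alpha> k))))"
  define x where "x i = (if i = k then \<zeta> else if i < n then 1 else 0)" for i
  show "x \<in> Cn n"
    using \<open>k < n\<close> by (simp add: x_def Cn_def)
  have "\<zeta> ^ \<alpha> k = exp (\<i> * of_real (pi / 2))"
    unfolding \<zeta>_def exp_of_nat_mult[symmetric] using \<open>\<alpha> k > 0\<close> by (simp add: field_simps)
  also have "\<dots> = \<i>"
    unfolding cis_conv_exp[symmetric] by (simp add: complex_eq_iff)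
  finally have \<zeta>_power: "\<zeta> ^ \<alpha> k = \<i>" .
  have monomial_x: "zzbar_monomial n \<gamma> \<delta> x = \<zeta> ^ \<gamma> k * cnj \<zeta> ^ \<delta> k" for \<gamma> \<delta>
  proof -
    have "(\<Prod>i\<in>{..<n} - {k}. x i ^ \<gamma> i * cnj (x i) ^ \<delta> i) = 1"
      by (rule prod.neutral) (simp add: x_def)
    then show ?thesis
      using \<open>k < n\<close> by (simp add: zzbar_monomial_def prod.remove x_def)
  qed
  have "cnj \<zeta> ^ \<alpha> k = - \<i>"
    using \<zeta>_power by (metis complex_cnj_i complex_cnj_power)
  then show "zzbar_monomial n \<alpha> \<beta> x \<noteq> zzbar_monomial n \<beta> \<alpha> x"
    using \<zeta>_power \<open>\<beta> k = 0\<close> by (simp add: monomial_x complex_eq_iff)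
qed

lemma Z_dependent_obtain_quasi_hom_vanishing_on_reals:
  assumes "\<not> Z_lin_indep n lam" and "\<forall>k<n. lam k > 0"
  obtains q d x where "quasi_hom n lam q d d" and "d \<noteq> 0"
    and "\<And>u. \<forall>i. cnj (u i) = u i \<Longrightarrow> q u = 0"
    and "x \<in> Cn n" and "q x \<noteq> 0"
proof -
  obtain c k where relation: "(\<Sum>i<n. of_int (c i) * lam i) = 0" and "k < n" and "c k > 0"
    using Z_dependent_obtain_positive_relation[OF assms(1)] .
  define a where "a i = (if i < n then nat (c i) else 0)" for i
  define b where "b i = (if i < n then nat (- c i) else 0)" for i
  have parts: "real (nat (c i)) - real (nat (- c i)) = of_int (c i)" for i
    by (cases "c i \<ge> 0") auto
  have "weight n lam a - weight n lam b = (\<Sum>i<n. of_int (c i) * lam i)"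
    unfolding weight_def sum_subtractf[symmetric]
    by (intro sum.cong) (auto simp: a_def b_def parts right_diff_distrib[symmetric] mult.commute)
  then have weights: "weight n lam b = weight n lam a"
    using relation by simp
  have "a k > 0" and "b k = 0"
    using \<open>k < n\<close> \<open>c k > 0\<close> by (simp_all add: a_def b_def)
  have "lam k * real (a k) \<le> weight n lam a"
    unfolding weight_def using \<open>k < n\<close> assms(2)
    by (intro member_le_sum) (auto simp: less_imp_le)
  moreover have "lam k * real (a k) > 0"
    using \<open>a k > 0\<close> assms(2) \<open>k < n\<close> by simp
  ultimately have "weight n lam a \<noteq> 0"
    by linarith
  moreover have "quasi_hom n lam (\<lambda>z. zzbar_monomial n a b z - zzbar_monomial n b a z) (weight n lam a) (weight n lam a)"
  proof (rule quasi_hom_zzbar_monomial_diff)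
    show "a \<noteq> b"
      using \<open>a k > 0\<close> \<open>b k = 0\<close> by auto
  qed (simp_all add: a_def b_def weights)
  moreover obtain x where "x \<in> Cn n" and "zzbar_monomial n a b x \<noteq> zzbar_monomial n b a x"
    using zzbar_monomial_diff_nonzero[of k n a b] \<open>k < n\<close> \<open>a k > 0\<close> \<open>b k = 0\<close> by blast
  moreover have "zzbar_monomial n a b u - zzbar_monomial n b a u = 0" if "\<forall>i. cnj (u i) = u i" for u
    using zzbar_monomial_swap_real[OF that] by simp
  ultimately show thesis
    using that[of "\<lambda>z. zzbar_monomial n a b z - zzbar_monomial n b a z" "weight n lam a" x] by simp
qed

lemma not_nonsparse_leaf_if_vanishing_quasi_hom:
  assumes "quasi_hom n lam q d1 d2" and "d2 \<noteq> 0" and "z \<in> unit_sphere n"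
    and "closure F \<subseteq> {x. q x = 0}" and "x \<in> Cn n" and "q x \<noteq> 0"
  shows "\<not> nonsparse_leaf n lam F z"
proof
  assume "nonsparse_leaf n lam F z"
  then have "closure F \<inter> unit_sphere n \<subseteq> {x. q x = 0} \<longrightarrow> (\<forall>x\<in>Cn n. q x = 0)"
    unfolding nonsparse_leaf_def using assms(1-3) by blast
  then show False
    using assms(4-6) by blast
qed

definition diagonal_point :: "nat \<Rightarrow> nat \<Rightarrow> complex" where
  "diagonal_point n i = (if i < n then of_real (1 / sqrt (real n)) else 0)"

lemma diagonal_point_in_unit_sphere:
  assumes "n \<ge> 1"
  shows "diagonal_point n \<in> unit_sphere n"
proof -
  have "(\<Sum>i<n. (cmod (diagonal_point n i))\<^sup>2) = (\<Sum>i<n. 1 / real n)"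
    by (intro sum.cong) (auto simp: diagonal_point_def power_divide norm_divide)
  also have "\<dots> = 1"
    using assms by simp
  finally show ?thesis
    by (simp add: unit_sphere_def Cn_def diagonal_point_def)
qed

lemma Phi_diagonal_point:
  "Phi lam (diagonal_point n) 1 = (\<lambda>k. if k < n then of_real (exp (- lam k) / sqrt (real n)) else 0)"
  by (auto simp: Phi_def diagonal_point_def simp flip: exp_of_real)

theorem proposition3p3:
  fixes n :: nat and lam :: "nat \<Rightarrow> real"
  assumes "n \<ge> 1" and "lam 0 = 1" and "\<forall>k<n. lam k > 0"
  shows "(Z_lin_indep n lam \<longrightarrow>
            (\<forall>F. F \<subseteq> unit_sphere n \<and> F \<noteq> {} \<longrightarrow>
               (\<forall>w\<in>closure F. (\<forall>k<n. w k \<noteq> 0) \<longrightarrow> nonsparse_leaf n lam F w)))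
       \<and> (\<not> Z_lin_indep n lam \<longrightarrow>
            (\<exists>G. G \<subseteq> unit_sphere n \<and>
               \<not> (\<exists>z\<in>closure G. nonsparse_leaf n lam G z) \<and>
               (\<lambda>k. if k < n then complex_of_real (exp (- lam k) / sqrt (real n)) else 0) \<in> S0 lam G))"
proof (intro conjI impI allI ballI)
  fix F :: "(nat \<Rightarrow> complex) set" and w
  assume "Z_lin_indep n lam" and "w \<in> closure F" and "\<forall>k<n. w k \<noteq> 0"
  then show "nonsparse_leaf n lam F w"
    unfolding nonsparse_leaf_def using quasi_hom_vanishing_at_nonzero_point by blast
next
  assume "\<not> Z_lin_indep n lam"
  then obtain q d x where "quasi_hom n lam q d d" and "d \<noteq> 0"
    and vanishing: "\<And>u. \<forall>i. cnj (u i) = u i \<Longrightarrow> q u = 0" and "x \<in> Cn n" and "q x \<noteq> 0"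
    using Z_dependent_obtain_quasi_hom_vanishing_on_reals assms(3) by blast
  let ?u = "diagonal_point n"
  have "?u \<in> unit_sphere n" and "q ?u = 0"
    using diagonal_point_in_unit_sphere[OF assms(1)] vanishing by (simp_all add: diagonal_point_def)
  then have "\<not> nonsparse_leaf n lam {?u} ?u"
    using not_nonsparse_leaf_if_vanishing_quasi_hom \<open>quasi_hom n lam q d d\<close> \<open>d \<noteq> 0\<close> \<open>x \<in> Cn n\<close> \<open>q x \<noteq> 0\<close> by simp
  moreover have "Phi lam ?u 1 \<in> S0 lam {?u}"
    by (auto simp: S0_def right_half_plane_def)
  ultimately show "\<exists>G. G \<subseteq> unit_sphere n \<and> \<not> (\<exists>z\<in>closure G. nonsparse_leaf n lam G z) \<and>
      (\<lambda>k. if k < n then complex_of_real (exp (- lam k) / sqrt (real n)) else 0) \<in> S0 lam G"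
    using \<open>?u \<in> unit_sphere n\<close> by (intro exI[of _ "{?u}"]) (simp add: Phi_diagonal_point)
qed

end
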